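(* Under (LS) with $k=0$ and (F1), there is $C_{Cov}<\infty$ such that for every $h\in\mathbb{Z}$, $$\sup_{\underline s_1,\underline s_2\in\mathcal S,\ u_1,u_2\in[0,1]}\Big|\operatorname{Cov}\big(f(\underline s_1,\widetilde{\underline X}_0(u_1)),f(\underline s_2,\widetilde{\underline X}_h(u_2))\big)\Big|\le C_{Cov}\,\vartheta^{|h|\delta/(2(1+\delta))}.$$
   Context: (LS) with $k=0$: $\underline X_{t,T}=\underline\mu(t/T)+\sum_jA_{t,T}(j)\underline\varepsilon_{t-j}$; $(\underline\varepsilon_t)$ i.i.d. centred in $\mathbb{R}^d$ with $E|\underline\varepsilon_1|_1<\infty$; $\underline\mu$ continuously differentiable; for some $\vartheta\in(0,1)$, $B<\infty$: $\sup_{t,T}|A_{t,T}(j)|_1\le B\vartheta^{|j|}$ ($|M|_1=\max_j\sum_i|m^{(i,j)}|$); entrywise continuously differentiable $A(\cdot,j)=(a^{(p,q)}(\cdot,j))$ with $\sup_u|a^{(p,q)}(u,j)|\le B\vartheta^{|j|}$ and $\sup_{t,T}T|A_{t,T}(j)-A(t/T,j)|_1\le B\vartheta^{|j|}$. $\widetilde{\underline X}_t(u)=\underline\mu(u)+\sum_jA(u,j)\underline\varepsilon_{t-j}$; truncations $\widetilde{\underline X}^{(M)}_t(u)$, $\underline X^{(M)}_{t,T}$: sums restricted to $|j|<M$. (F1): $(\mathcal S,\rho)$ compact semimetric, $\mathcal S\subseteq\overline{\mathbb{R}}^d$; $\sup_{\underline s}|f(\underline s,\underline x)-f(\underline s,\underline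 x^\circ)|\le C_{Lip}|\underline x-\underline x^\circ|_1$; for some $\delta\in(0,1/2)$ (the $\delta$ in the claim), uniformly bounded $(2+\delta)$-th absolute moments of $f(\underline s,\underline X_{t,T}),f(\underline s,\underline X^{(M)}_{t,T})$ (over $t\le T,\underline s,M$) and of $f(\underline s,\widetilde{\underline X}_0(u)),f(\underline s,\widetilde{\underline X}^{(M)}_0(u))$ (over $u,\underline s,M$). *)

theory Defs
  imports "HOL-Probability.Probability"
begin

definition vnorm1 :: "real ^ 'd \<Rightarrow> real" where
  "vnorm1 x = (\<Sum>i\<in>UNIV. \<bar>x $ i\<bar>)"

text \<open>The matrix norm |M|_1 = max over columns j of sum over rows i of |m(i,j)|.
  A matrix is real^'d^'d, with m $ i $ j the entry in row i, column j.\<close>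
definition mnorm1 :: "real ^ 'd ^ 'd \<Rightarrow> real" where
  "mnorm1 m = Max (range (\<lambda>j. \<Sum>i\<in>UNIV. \<bar>m $ i $ j\<bar>))"

definition cov :: "'a measure \<Rightarrow> ('a \<Rightarrow> real) \<Rightarrow> ('a \<Rightarrow> real) \<Rightarrow> real" where
  "cov M Y Z = (\<integral>w. Y w * Z w \<partial>M) - (\<integral>w. Y w \<partial>M) * (\<integral>w. Z w \<partial>M)"

definition compact_semimetric :: "'s set \<Rightarrow> ('s \<Rightarrow> 's \<Rightarrow> real) \<Rightarrow> bool" where
  "compact_semimetric S \<rho> \<longleftrightarrow>
     (\<forall>x\<in>S. \<forall>y\<in>S. \<rho> x y \<ge> 0 \<and> \<rho> x y = \<rho> y x) \<and> (\<forall>x\<in>S. \<rho> x x = 0) \<and>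
     (\<forall>s. (\<forall>n. s n \<in> S) \<longrightarrow>
        (\<exists>(r::nat \<Rightarrow> nat) x. strict_mono r \<and> x \<in> S \<and> (\<lambda>n. \<rho> (s (r n)) x) \<longlonglongrightarrow> 0))"

definition Xtil :: "(real \<Rightarrow> real ^ 'd) \<Rightarrow> (real \<Rightarrow> int \<Rightarrow> real ^ 'd ^ 'd) \<Rightarrow>
    (int \<Rightarrow> 'a \<Rightarrow> real ^ 'd) \<Rightarrow> int \<Rightarrow> real \<Rightarrow> 'a \<Rightarrow> real ^ 'd" where
  "Xtil \<mu> A eps t u w = \<mu> u + (\<Sum>\<^sub>\<infinity>j::int. A u j *v eps (t - j) w)"

definition XtilM :: "(real \<Rightarrow> real ^ 'd) \<Rightarrow> (real \<Rightarrow> int \<Rightarrow> real ^ 'd ^ 'd) \<Rightarrow>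
    (int \<Rightarrow> 'a \<Rightarrow> real ^ 'd) \<Rightarrow> nat \<Rightarrow> int \<Rightarrow> real \<Rightarrow> 'a \<Rightarrow> real ^ 'd" where
  "XtilM \<mu> A eps M t u w = \<mu> u + (\<Sum>j\<in>{j::int. \<bar>j\<bar> < int M}. A u j *v eps (t - j) w)"

definition XLS :: "(real \<Rightarrow> real ^ 'd) \<Rightarrow> (int \<Rightarrow> nat \<Rightarrow> int \<Rightarrow> real ^ 'd ^ 'd) \<Rightarrow>
    (int \<Rightarrow> 'a \<Rightarrow> real ^ 'd) \<Rightarrow> int \<Rightarrow> nat \<Rightarrow> 'a \<Rightarrow> real ^ 'd" where
  "XLS \<mu> At eps t T w = \<mu> (real_of_int t / real T) + (\<Sum>\<^sub>\<infinity>j::int. At t T j *v eps (t - j) w)"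

definition XLSM :: "(real \<Rightarrow> real ^ 'd) \<Rightarrow> (int \<Rightarrow> nat \<Rightarrow> int \<Rightarrow> real ^ 'd ^ 'd) \<Rightarrow>
    (int \<Rightarrow> 'a \<Rightarrow> real ^ 'd) \<Rightarrow> nat \<Rightarrow> int \<Rightarrow> nat \<Rightarrow> 'a \<Rightarrow> real ^ 'd" where
  "XLSM \<mu> At eps M t T w = \<mu> (real_of_int t / real T)
      + (\<Sum>j\<in>{j::int. \<bar>j\<bar> < int M}. At t T j *v eps (t - j) w)"

end

theory Submission
  imports Defs
begin

text \<open>Truncate both observations at lag \<open>m = \<lceil>\<bar>h\<bar>/2\<rceil>\<close>. The truncated observations are
  functions of the innovations on the disjoint windows \<open>\<bar>i\<bar> < m\<close> and \<open>\<bar>i - h\<bar> < m\<close>, hence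
  independent. Truncation moves each observation by \<open>O(\<theta> ^ m)\<close> in \<open>L\<^sup>1\<close>, by the Lipschitz
  property of \<open>f\<close> and the geometric decay of the coefficients. An \<open>L\<^sup>1\<close> error \<open>\<epsilon>\<close> in one
  factor changes a covariance by at most \<open>L * \<epsilon> + O(L powr -\<delta>)\<close> when all factors have
  bounded \<open>(2 + \<delta>)\<close>-th moments (split according to whether the other factor exceeds \<open>L\<close>),
  and \<open>L = \<theta> powr (-m / (1 + \<delta>))\<close> balances the two terms at
  \<open>\<theta> powr (m * \<delta> / (1 + \<delta>)) \<le> \<theta> powr (\<bar>h\<bar> * \<delta> / (2 * (1 + \<delta>)))\<close>. The moment bounds at
  time \<open>h\<close> follow from those at time \<open>0\<close> because the law of the innovation sequence is
  shift invariant.\<close>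

section \<open>Sums over the integers\<close>

definition lag_window :: "nat \<Rightarrow> int set" where
  "lag_window n = {j. \<bar>j\<bar> < int n}"

lemma finite_lag_window [simp]: "finite (lag_window n)"
  by (rule finite_subset[of _ "{- int n..int n}"]) (auto simp: lag_window_def)

lemma lag_window_mono: "m \<le> n \<Longrightarrow> lag_window m \<subseteq> lag_window n"
  by (auto simp: lag_window_def)

lemma lag_window_Suc: "lag_window (Suc n) = insert (int n) (insert (- int n) (lag_window n))"
  by (auto simp: lag_window_def)

lemma finite_subset_lag_window:
  assumes "finite F"
  obtains n where "F \<subseteq> lag_window n"
proof
  show "F \<subseteq> lag_window (Suc (nat (\<Sum>j\<in>F. \<bar>j\<bar>)))"
  proof
    fix j assume "j \<in> F"
    then have "\<bar>j\<bar> \<le> (\<Sum>j\<in>F. \<bar>j\<bar>)"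
      using assms by (intro member_le_sum) auto
    then show "j \<in> lag_window (Suc (nat (\<Sum>j\<in>F. \<bar>j\<bar>)))"
      by (simp add: lag_window_def)
  qed
qed

lemma filterlim_lag_window_finite_subsets:
  "filterlim lag_window (finite_subsets_at_top UNIV) sequentially"
  unfolding filterlim_finite_subsets_at_top
proof (intro allI impI)
  fix X :: "int set"
  assume "finite X \<and> X \<subseteq> UNIV"
  then obtain n where "X \<subseteq> lag_window n"
    using finite_subset_lag_window by blast
  then show "\<forall>\<^sub>F k in sequentially. finite (lag_window k) \<and> X \<subseteq> lag_window k \<and> lag_window k \<subseteq> UNIV"
    unfolding eventually_sequentially by (meson finite_lag_window lag_window_mono order_trans subset_UNIV)
qed

lemma tendsto_sum_lag_window_infsum:
  assumes "a summable_on UNIV"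
  shows "(\<lambda>n. \<Sum>j\<in>lag_window n. a j) \<longlonglongrightarrow> infsum a UNIV"
  using filterlim_compose[OF infsum_tendsto[OF assms] filterlim_lag_window_finite_subsets] .

lemma sum_geometric_lag_window_diff_le:
  fixes \<theta> :: real
  assumes "0 < \<theta>" "\<theta> < 1"
  shows "(\<Sum>j\<in>lag_window n - lag_window m. \<theta> ^ nat \<bar>j\<bar>) \<le> 2 * (\<theta> ^ m - \<theta> ^ max m n) / (1 - \<theta>)"
proof (induction n)
  case 0
  then show ?case by (simp add: lag_window_def)
next
  case (Suc n)
  show ?case
  proof (cases "n < m")
    case True
    then have "lag_window (Suc n) - lag_window m = {}"
      using lag_window_mono[of "Suc n" m] by auto
    moreover have "max m (Suc n) = m"
      using True by simp
    ultimately show ?thesis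
      by (simp only: sum.empty) simp
  next
    case False
    have "(\<Sum>j\<in>lag_window (Suc n) - lag_window m. \<theta> ^ nat \<bar>j\<bar>)
        \<le> (\<Sum>j\<in>insert (int n) (insert (- int n) (lag_window n - lag_window m)). \<theta> ^ nat \<bar>j\<bar>)"
      using assms by (intro sum_mono2) (auto simp: lag_window_Suc)
    also have "\<dots> \<le> \<theta> ^ n + (\<theta> ^ n + (\<Sum>j\<in>lag_window n - lag_window m. \<theta> ^ nat \<bar>j\<bar>))"
      using assms by (simp add: sum.insert_if)
    also have "\<dots> \<le> 2 * \<theta> ^ n + 2 * (\<theta> ^ m - \<theta> ^ n) / (1 - \<theta>)"
      using Suc.IH False by simp
    also have "\<dots> = 2 * (\<theta> ^ m - \<theta> ^ max m (Suc n)) / (1 - \<theta>)"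
      using assms False by (simp add: field_simps)
    finally show ?thesis .
  qed
qed

lemma sum_geometric_lag_window_diff_le':
  fixes \<theta> :: real
  assumes "0 < \<theta>" "\<theta> < 1"
  shows "(\<Sum>j\<in>lag_window n - lag_window m. \<theta> ^ nat \<bar>j\<bar>) \<le> 2 * \<theta> ^ m / (1 - \<theta>)"
proof -
  have "2 * (\<theta> ^ m - \<theta> ^ max m n) / (1 - \<theta>) \<le> 2 * \<theta> ^ m / (1 - \<theta>)"
    using assms by (intro divide_right_mono) auto
  with sum_geometric_lag_window_diff_le[OF assms, of n m] show ?thesis
    by linarith
qed

section \<open>The \<open>l\<^sub>1\<close>-norm\<close>

lemma vnorm1_nonneg [simp]: "0 \<le> vnorm1 x"
  by (simp add: vnorm1_def sum_nonneg)

lemma vnorm1_zero [simp]: "vnorm1 0 = 0"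
  by (simp add: vnorm1_def)

lemma norm_le_vnorm1: "norm x \<le> vnorm1 x"
  unfolding vnorm1_def by (rule norm_le_l1_cart)

lemma vnorm1_le_card_norm: "vnorm1 (x::real^'d) \<le> real CARD('d) * norm x"
proof -
  have "vnorm1 x \<le> (\<Sum>i\<in>(UNIV::'d set). norm x)"
    unfolding vnorm1_def by (intro sum_mono component_le_norm_cart)
  then show ?thesis by simp
qed

lemma vnorm1_triangle: "vnorm1 (x + y) \<le> vnorm1 x + vnorm1 y"
  unfolding vnorm1_def sum.distrib[symmetric] by (intro sum_mono) (simp add: abs_triangle_ineq)

lemma vnorm1_sum_le: "vnorm1 (\<Sum>j\<in>F. x j) \<le> (\<Sum>j\<in>F. vnorm1 (x j))"
proof (induction F rule: infinite_finite_induct)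
  case (insert j F)
  then show ?case using vnorm1_triangle[of "x j" "sum x F"] by simp
qed simp_all

lemma continuous_on_vnorm1: "continuous_on UNIV vnorm1"
  unfolding vnorm1_def by (intro continuous_intros)

lemma borel_measurable_vnorm1 [measurable]: "vnorm1 \<in> borel_measurable borel"
  by (rule borel_measurable_continuous_onI[OF continuous_on_vnorm1])

lemma vnorm1_matrix_vector_mult_le:
  fixes A :: "real^'d^'d"
  assumes "\<And>p q. \<bar>A $ p $ q\<bar> \<le> c"
  shows "vnorm1 (A *v x) \<le> real CARD('d) * c * vnorm1 x"
proof -
  have "vnorm1 (A *v x) \<le> (\<Sum>p\<in>(UNIV::'d set). \<Sum>q\<in>UNIV. \<bar>A $ p $ q * x $ q\<bar>)"
    unfolding vnorm1_def matrix_vector_mult_def by (intro sum_mono sum_abs) simp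
  also have "\<dots> \<le> (\<Sum>p\<in>(UNIV::'d set). \<Sum>q\<in>UNIV. c * \<bar>x $ q\<bar>)"
    by (intro sum_mono) (simp add: abs_mult assms mult_right_mono)
  also have "\<dots> = real CARD('d) * c * vnorm1 x"
    by (simp add: vnorm1_def sum_distrib_left mult.assoc)
  finally show ?thesis .
qed

lemma borel_measurable_matrix_vector_mult [measurable (raw)]:
  fixes A :: "real^'d^'d"
  assumes "f \<in> borel_measurable M"
  shows "(\<lambda>x. A *v f x) \<in> borel_measurable M"
  using measurable_compose[OF assms borel_measurable_continuous_onI
      [OF linear_continuous_on[OF matrix_vector_mul_bounded_linear[of A]]]] by simp

lemma borel_measurable_vnorm1_Lipschitz:
  fixes g :: "real^'d \<Rightarrow> real"
  assumes "\<And>x y. \<bar>g x - g y\<bar> \<le> C * vnorm1 (x - y)"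
  shows "g \<in> borel_measurable borel"
proof (rule borel_measurable_continuous_onI, rule lipschitz_on_continuous_on)
  show "(max C 0 * real CARD('d))-lipschitz_on UNIV g"
  proof (rule lipschitz_onI)
    fix x y :: "real^'d"
    have "dist (g x) (g y) \<le> max C 0 * vnorm1 (x - y)"
      using assms[of x y] by (simp add: dist_real_def) (smt (verit) mult_right_mono vnorm1_nonneg)
    also have "\<dots> \<le> max C 0 * (real CARD('d) * norm (x - y))"
      by (intro mult_left_mono vnorm1_le_card_norm) auto
    finally show "dist (g x) (g y) \<le> max C 0 * real CARD('d) * dist x y"
      by (simp add: dist_norm mult.assoc)
  qed simp
qed

section \<open>Unconditional sums of vectors\<close>

lemma summable_on_finite_sum:
  fixes a :: "'i \<Rightarrow> 'x \<Rightarrow> real"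
  assumes "finite I" "\<And>i. i \<in> I \<Longrightarrow> a i summable_on A"
  shows "(\<lambda>x. \<Sum>i\<in>I. a i x) summable_on A"
  using assms by (induction I rule: finite_induct) (simp_all add: summable_on_add)

lemma summable_on_norm_vec:
  fixes a :: "'i \<Rightarrow> real^'d"
  assumes "a summable_on A"
  shows "(\<lambda>x. norm (a x)) summable_on A"
proof -
  have "(\<lambda>x. norm (a x $ i)) summable_on A" for i
    using summable_on_iff_abs_summable_on_real[THEN iffD1,
        OF summable_on_bounded_linear[OF bounded_linear_vec_nth assms]] .
  then have "(\<lambda>x. \<Sum>i\<in>UNIV. norm (a x $ i)) summable_on A"
    by (intro summable_on_finite_sum) auto
  then show ?thesis
    by (rule summable_on_comparison_test) (auto simp: norm_le_l1_cart)
qed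

lemma norm_summable_on_iff_SUP_lag_window:
  fixes a :: "int \<Rightarrow> real^'d"
  shows "(\<lambda>j. norm (a j)) summable_on UNIV \<longleftrightarrow>
    (SUP n. \<Sum>j\<in>lag_window n. ennreal (vnorm1 (a j))) < \<top>"
proof
  assume summable: "(\<lambda>j. norm (a j)) summable_on UNIV"
  have "(\<Sum>j\<in>lag_window n. ennreal (vnorm1 (a j)))
      \<le> ennreal (real CARD('d) * infsum (\<lambda>j. norm (a j)) UNIV)" for n
  proof -
    have "(\<Sum>j\<in>lag_window n. vnorm1 (a j)) \<le> (\<Sum>j\<in>lag_window n. real CARD('d) * norm (a j))"
      by (intro sum_mono vnorm1_le_card_norm)
    also have "\<dots> \<le> real CARD('d) * infsum (\<lambda>j. norm (a j)) UNIV"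
      unfolding sum_distrib_left[symmetric]
      using summable by (intro mult_left_mono finite_sum_le_infsum) auto
    finally show ?thesis
      by (simp add: sum_ennreal ennreal_leI)
  qed
  then show "(SUP n. \<Sum>j\<in>lag_window n. ennreal (vnorm1 (a j))) < \<top>"
    by (intro le_less_trans[OF SUP_least ennreal_less_top])
next
  define C where "C = (SUP n. \<Sum>j\<in>lag_window n. ennreal (vnorm1 (a j)))"
  assume "(SUP n. \<Sum>j\<in>lag_window n. ennreal (vnorm1 (a j))) < \<top>"
  then have C_finite: "C < \<top>"
    by (simp add: C_def)
  have "(\<Sum>j\<in>F. norm (a j)) \<le> enn2real C" if "finite F" for F
  proof -
    obtain n where n: "F \<subseteq> lag_window n"
      using finite_subset_lag_window[OF \<open>finite F\<close>] .
    have "(\<Sum>j\<in>F. norm (a j)) \<le> (\<Sum>j\<in>lag_window n. norm (a j))"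
      using n by (intro sum_mono2) auto
    also have "\<dots> \<le> (\<Sum>j\<in>lag_window n. vnorm1 (a j))"
      by (intro sum_mono norm_le_vnorm1)
    also have "\<dots> = enn2real (\<Sum>j\<in>lag_window n. ennreal (vnorm1 (a j)))"
      by (simp add: sum_ennreal sum_nonneg)
    also have "\<dots> \<le> enn2real C"
      unfolding C_def using C_finite C_def by (intro enn2real_mono SUP_upper) auto
    finally show ?thesis .
  qed
  then have "bdd_above (sum (\<lambda>j. norm (a j)) ` {F. F \<subseteq> UNIV \<and> finite F})"
    by (intro bdd_aboveI2[where M="enn2real C"]) auto
  then show "(\<lambda>j. norm (a j)) summable_on UNIV"
    by (rule nonneg_bdd_above_summable_on[rotated]) simp
qed

lemma borel_measurable_infsum_int:
  fixes g :: "int \<Rightarrow> 'b \<Rightarrow> real^'d"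
  assumes [measurable]: "\<And>j. g j \<in> borel_measurable N"
  shows "(\<lambda>w. infsum (\<lambda>j. g j w) UNIV) \<in> borel_measurable N"
proof -
  define conv where
    "conv w \<longleftrightarrow> (SUP n. \<Sum>j\<in>lag_window n. ennreal (vnorm1 (g j w))) < \<top>" for w
  have eq: "infsum (\<lambda>j. g j w) UNIV = (if conv w then lim (\<lambda>n. \<Sum>j\<in>lag_window n. g j w) else 0)" for w
  proof (cases "conv w")
    case True
    then have "(\<lambda>j. g j w) summable_on UNIV"
      unfolding conv_def norm_summable_on_iff_SUP_lag_window[symmetric]
      by (rule abs_summable_summable)
    with True show ?thesis
      by (simp add: limI[OF tendsto_sum_lag_window_infsum])
  next
    case False
    then have "\<not> (\<lambda>j. g j w) summable_on UNIV"
      unfolding conv_def norm_summable_on_iff_SUP_lag_window[symmetric]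
      using summable_on_norm_vec by blast
    with False show ?thesis
      by (simp add: infsum_not_exists)
  qed
  have [measurable]: "Measurable.pred N conv"
    unfolding conv_def by measurable
  show ?thesis
    unfolding eq by measurable
qed

lemma ennreal_vnorm1_infsum_minus_le_SUP:
  fixes g :: "int \<Rightarrow> real^'d"
  assumes summable: "(\<lambda>j. norm (g j)) summable_on UNIV"
  shows "ennreal (vnorm1 (infsum g UNIV - (\<Sum>j\<in>lag_window m. g j)))
           \<le> (SUP n. \<Sum>j\<in>lag_window n - lag_window m. ennreal (vnorm1 (g j)))"
proof -
  have "g summable_on UNIV"
    using summable by (rule abs_summable_summable)
  then have lim: "(\<lambda>n. \<Sum>j\<in>lag_window n. g j) \<longlonglongrightarrow> infsum g UNIV"
    by (rule tendsto_sum_lag_window_infsum)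
  have "(\<lambda>n. vnorm1 ((\<Sum>j\<in>lag_window n. g j) - (\<Sum>j\<in>lag_window m. g j)))
          \<longlonglongrightarrow> vnorm1 (infsum g UNIV - (\<Sum>j\<in>lag_window m. g j))"
    unfolding vnorm1_def by (intro tendsto_intros lim)
  then have lim2: "(\<lambda>n. ennreal (vnorm1 ((\<Sum>j\<in>lag_window n. g j) - (\<Sum>j\<in>lag_window m. g j))))
          \<longlonglongrightarrow> ennreal (vnorm1 (infsum g UNIV - (\<Sum>j\<in>lag_window m. g j)))"
    by (rule tendsto_ennrealI)
  show ?thesis
  proof (rule LIMSEQ_le_const2[OF lim2], intro exI[of _ m] allI impI)
    fix n assume "m \<le> n"
    then have sub: "lag_window m \<subseteq> lag_window n"
      by (rule lag_window_mono)
    have "(\<Sum>j\<in>lag_window n. g j) - (\<Sum>j\<in>lag_window m. g j)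
        = (\<Sum>j\<in>lag_window n - lag_window m. g j)"
      using sub by (simp add: sum_diff)
    then have "vnorm1 ((\<Sum>j\<in>lag_window n. g j) - (\<Sum>j\<in>lag_window m. g j))
        \<le> (\<Sum>j\<in>lag_window n - lag_window m. vnorm1 (g j))"
      using vnorm1_sum_le by metis
    then have "ennreal (vnorm1 ((\<Sum>j\<in>lag_window n. g j) - (\<Sum>j\<in>lag_window m. g j)))
               \<le> ennreal (\<Sum>j\<in>lag_window n - lag_window m. vnorm1 (g j))"
      by (rule ennreal_leI)
    also have "\<dots> = (\<Sum>j\<in>lag_window n - lag_window m. ennreal (vnorm1 (g j)))"
      by (rule sum_ennreal[symmetric]) simp
    also have "\<dots> \<le> (SUP n. \<Sum>j\<in>lag_window n - lag_window m. ennreal (vnorm1 (g j)))"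
      by (rule SUP_upper) simp
    finally show "ennreal (vnorm1 ((\<Sum>j\<in>lag_window n. g j) - (\<Sum>j\<in>lag_window m. g j)))
               \<le> (SUP n. \<Sum>j\<in>lag_window n - lag_window m. ennreal (vnorm1 (g j)))" .
  qed
qed

section \<open>Tails of linear filters\<close>

context
  fixes N :: "'b measure" and v :: "int \<Rightarrow> 'b \<Rightarrow> real^'d" and a :: "int \<Rightarrow> real^'d^'d"
    and b \<theta> E :: real
  assumes v_measurable [measurable]: "\<And>j. v j \<in> borel_measurable N"
    and nn_integral_v_le: "\<And>j. (\<integral>\<^sup>+w. ennreal (vnorm1 (v j w)) \<partial>N) \<le> ennreal E"
    and a_le: "\<And>j p q. \<bar>a j $ p $ q\<bar> \<le> b * \<theta> ^ nat \<bar>j\<bar>"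
    and \<theta>: "0 < \<theta>" "\<theta> < 1" and b_nonneg: "0 \<le> b" and E_nonneg: "0 \<le> E"
begin

lemma nn_integral_linear_filter_term_le:
  "(\<integral>\<^sup>+w. ennreal (vnorm1 (a j *v v j w)) \<partial>N) \<le> ennreal (real CARD('d) * b * E * \<theta> ^ nat \<bar>j\<bar>)"
proof -
  define c where "c = real CARD('d) * (b * \<theta> ^ nat \<bar>j\<bar>)"
  have c_nonneg: "0 \<le> c"
    using b_nonneg \<theta> by (simp add: c_def)
  have "(\<integral>\<^sup>+w. ennreal (vnorm1 (a j *v v j w)) \<partial>N) \<le> (\<integral>\<^sup>+w. ennreal c * ennreal (vnorm1 (v j w)) \<partial>N)"
  proof (rule nn_integral_mono)
    fix w
    have "vnorm1 (a j *v v j w) \<le> c * vnorm1 (v j w)"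
      unfolding c_def by (rule vnorm1_matrix_vector_mult_le) (rule a_le)
    then show "ennreal (vnorm1 (a j *v v j w)) \<le> ennreal c * ennreal (vnorm1 (v j w))"
      using c_nonneg by (simp add: ennreal_mult[symmetric] ennreal_leI)
  qed
  also have "\<dots> = ennreal c * (\<integral>\<^sup>+w. ennreal (vnorm1 (v j w)) \<partial>N)"
    by (rule nn_integral_cmult) measurable
  also have "\<dots> \<le> ennreal c * ennreal E"
    by (intro mult_left_mono nn_integral_v_le) simp
  also have "\<dots> = ennreal (real CARD('d) * b * E * \<theta> ^ nat \<bar>j\<bar>)"
    using c_nonneg E_nonneg by (simp add: ennreal_mult[symmetric] c_def mult_ac)
  finally show ?thesis .
qed

lemma nn_integral_SUP_annulus_le:
  "(\<integral>\<^sup>+w. (SUP n. \<Sum>j\<in>lag_window n - lag_window m. ennreal (vnorm1 (a j *v v j w))) \<partial>N)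
     \<le> ennreal (real CARD('d) * b * E * (2 * \<theta> ^ m / (1 - \<theta>)))"
proof -
  define T where "T n w = (\<Sum>j\<in>lag_window n - lag_window m. ennreal (vnorm1 (a j *v v j w)))" for n w
  have T_measurable [measurable]: "T n \<in> borel_measurable N" for n
    unfolding T_def by measurable
  have "incseq T"
  proof (rule incseq_SucI)
    fix n
    have "lag_window n - lag_window m \<subseteq> lag_window (Suc n) - lag_window m"
      using lag_window_mono[of n "Suc n"] by auto
    then show "T n \<le> T (Suc n)"
      unfolding T_def le_fun_def by (intro allI sum_mono2) auto
  qed
  then have "(\<integral>\<^sup>+w. (SUP n. T n w) \<partial>N) = (SUP n. integral\<^sup>N N (T n))"
    by (rule nn_integral_monotone_convergence_SUP[OF _ T_measurable])
  also have "\<dots> \<le> ennreal (real CARD('d) * b * E * (2 * \<theta> ^ m / (1 - \<theta>)))"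
  proof (rule SUP_least)
    fix n
    have "integral\<^sup>N N (T n) = (\<Sum>j\<in>lag_window n - lag_window m. \<integral>\<^sup>+w. ennreal (vnorm1 (a j *v v j w)) \<partial>N)"
      unfolding T_def by (rule nn_integral_sum) measurable
    also have "\<dots> \<le> (\<Sum>j\<in>lag_window n - lag_window m. ennreal (real CARD('d) * b * E * \<theta> ^ nat \<bar>j\<bar>))"
      by (intro sum_mono nn_integral_linear_filter_term_le)
    also have "\<dots> = ennreal (real CARD('d) * b * E * (\<Sum>j\<in>lag_window n - lag_window m. \<theta> ^ nat \<bar>j\<bar>))"
      using b_nonneg \<theta> E_nonneg by (simp add: sum_ennreal sum_distrib_left)
    also have "\<dots> \<le> ennreal (real CARD('d) * b * E * (2 * \<theta> ^ m / (1 - \<theta>)))"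
      using b_nonneg E_nonneg
      by (intro ennreal_leI mult_left_mono sum_geometric_lag_window_diff_le' \<theta>) auto
    finally show "integral\<^sup>N N (T n) \<le> ennreal (real CARD('d) * b * E * (2 * \<theta> ^ m / (1 - \<theta>)))" .
  qed
  finally show ?thesis
    by (simp add: T_def)
qed

lemma AE_norm_summable_linear_filter:
  "AE w in N. (\<lambda>j. norm (a j *v v j w)) summable_on UNIV"
proof -
  have "AE w in N. (SUP n. \<Sum>j\<in>lag_window n - lag_window 0. ennreal (vnorm1 (a j *v v j w))) \<noteq> \<infinity>"
  proof (rule nn_integral_PInf_AE)
    show "(\<integral>\<^sup>+w. (SUP n. \<Sum>j\<in>lag_window n - lag_window 0. ennreal (vnorm1 (a j *v v j w))) \<partial>N) \<noteq> \<infinity>"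
      using nn_integral_SUP_annulus_le[of 0] by (auto simp: top_unique)
  qed measurable
  then show ?thesis
  proof (rule eventually_mono)
    fix w
    assume "(SUP n. \<Sum>j\<in>lag_window n - lag_window 0. ennreal (vnorm1 (a j *v v j w))) \<noteq> \<infinity>"
    moreover have "lag_window 0 = {}"
      by (simp add: lag_window_def)
    ultimately show "(\<lambda>j. norm (a j *v v j w)) summable_on UNIV"
      unfolding norm_summable_on_iff_SUP_lag_window
      by (simp only: Diff_empty top.not_eq_extremum infinity_ennreal_def)
  qed
qed

lemma nn_integral_linear_filter_tail_le:
  "(\<integral>\<^sup>+w. ennreal (vnorm1 (infsum (\<lambda>j. a j *v v j w) UNIV - (\<Sum>j\<in>lag_window m. a j *v v j w))) \<partial>N)
     \<le> ennreal (real CARD('d) * b * E * (2 * \<theta> ^ m / (1 - \<theta>)))"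
proof -
  have "(\<integral>\<^sup>+w. ennreal (vnorm1 (infsum (\<lambda>j. a j *v v j w) UNIV - (\<Sum>j\<in>lag_window m. a j *v v j w))) \<partial>N)
      \<le> (\<integral>\<^sup>+w. (SUP n. \<Sum>j\<in>lag_window n - lag_window m. ennreal (vnorm1 (a j *v v j w))) \<partial>N)"
    using AE_norm_summable_linear_filter
    by (intro nn_integral_mono_AE) (rule eventually_mono, assumption, rule ennreal_vnorm1_infsum_minus_le_SUP)
  also have "\<dots> \<le> ennreal (real CARD('d) * b * E * (2 * \<theta> ^ m / (1 - \<theta>)))"
    by (rule nn_integral_SUP_annulus_le)
  finally show ?thesis .
qed

end

section \<open>Moment inequalities\<close>

lemma mult_powr_le_powr_add_powr:
  fixes x y \<delta> :: real
  assumes "0 \<le> x" "0 \<le> y" "0 < \<delta>"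
  shows "x * y powr (1 + \<delta>) \<le> x powr (2 + \<delta>) + y powr (2 + \<delta>)"
proof -
  have self_mult: "t * t powr (1 + \<delta>) = t powr (2 + \<delta>)" if "0 \<le> t" for t :: real
    using powr_mult_base[OF that, of "1 + \<delta>"] by (simp add: add.assoc[symmetric])
  show ?thesis
  proof (cases "x \<le> y")
    case True
    then have "x * y powr (1 + \<delta>) \<le> y * y powr (1 + \<delta>)"
      by (intro mult_right_mono) auto
    then show ?thesis
      using self_mult[OF assms(2)] powr_ge_zero[of x "2 + \<delta>"] by linarith
  next
    case False
    then have "x * y powr (1 + \<delta>) \<le> x * x powr (1 + \<delta>)"
      using assms by (intro mult_left_mono powr_mono2) auto
    then show ?thesis
      using self_mult[OF assms(1)] powr_ge_zero[of y "2 + \<delta>"] by linarith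
  qed
qed

lemma abs_diff_mult_le_split:
  fixes y y' z L \<delta> :: real
  assumes L: "0 < L" and \<delta>: "0 < \<delta>"
  shows "\<bar>(y - y') * z\<bar> \<le> L * \<bar>y - y'\<bar>
     + L powr (-\<delta>) * (\<bar>y\<bar> powr (2 + \<delta>) + \<bar>y'\<bar> powr (2 + \<delta>) + 2 * \<bar>z\<bar> powr (2 + \<delta>))"
proof (cases "\<bar>z\<bar> \<le> L")
  case True
  then have "\<bar>(y - y') * z\<bar> \<le> L * \<bar>y - y'\<bar>"
    unfolding abs_mult using mult_left_mono[OF True abs_ge_zero[of "y - y'"]] by (simp add: mult.commute)
  moreover have "0 \<le> L powr (-\<delta>) * (\<bar>y\<bar> powr (2 + \<delta>) + \<bar>y'\<bar> powr (2 + \<delta>) + 2 * \<bar>z\<bar> powr (2 + \<delta>))"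
    by simp
  ultimately show ?thesis
    by linarith
next
  case False
  have "1 \<le> (\<bar>z\<bar> / L) powr \<delta>"
    using False L \<delta> by (intro ge_one_powr_ge_zero) auto
  then have "\<bar>z\<bar> \<le> \<bar>z\<bar> * (\<bar>z\<bar> / L) powr \<delta>"
    by (metis abs_ge_zero mult.right_neutral mult_left_mono)
  also have "\<dots> = L powr (-\<delta>) * \<bar>z\<bar> powr (1 + \<delta>)"
    using L by (simp add: powr_divide powr_minus_divide powr_add)
  finally have z_le: "\<bar>z\<bar> \<le> L powr (-\<delta>) * \<bar>z\<bar> powr (1 + \<delta>)" .
  have "\<bar>(y - y') * z\<bar> \<le> (\<bar>y\<bar> + \<bar>y'\<bar>) * \<bar>z\<bar>"
    by (simp add: abs_mult mult_right_mono)
  also have "\<dots> \<le> L powr (-\<delta>) * (\<bar>y\<bar> * \<bar>z\<bar> powr (1 + \<delta>) + \<bar>y'\<bar> * \<bar>z\<bar> powr (1 + \<delta>))"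
    using mult_left_mono[OF z_le, of "\<bar>y\<bar> + \<bar>y'\<bar>"] by (simp add: algebra_simps)
  also have "\<dots> \<le> L powr (-\<delta>) * ((\<bar>y\<bar> powr (2 + \<delta>) + \<bar>z\<bar> powr (2 + \<delta>)) + (\<bar>y'\<bar> powr (2 + \<delta>) + \<bar>z\<bar> powr (2 + \<delta>)))"
    using \<delta> by (intro mult_left_mono add_mono mult_powr_le_powr_add_powr) auto
  also have "\<dots> = L powr (-\<delta>) * (\<bar>y\<bar> powr (2 + \<delta>) + \<bar>y'\<bar> powr (2 + \<delta>) + 2 * \<bar>z\<bar> powr (2 + \<delta>))"
    by (simp add: algebra_simps)
  finally show ?thesis
    using L by (simp add: add_increasing)
qed

lemma abs_le_one_add_abs_powr:
  fixes y p :: real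
  assumes "1 \<le> p"
  shows "\<bar>y\<bar> \<le> 1 + \<bar>y\<bar> powr p"
proof (cases "\<bar>y\<bar> \<le> 1")
  case False
  then have "\<bar>y\<bar> powr 1 \<le> \<bar>y\<bar> powr p"
    using assms by (intro powr_mono) auto
  then show ?thesis
    using False by simp
qed (use powr_ge_zero[of "\<bar>y\<bar>" p] in linarith)

lemma abs_mult_le_two_add_abs_powr:
  fixes y z p :: real
  assumes "2 \<le> p"
  shows "\<bar>y * z\<bar> \<le> 2 + \<bar>y\<bar> powr p + \<bar>z\<bar> powr p"
proof -
  have square_le: "t\<^sup>2 \<le> 1 + t powr p" if "0 \<le> t" for t :: real
  proof (cases "t \<le> 1")
    case True
    then show ?thesis
      using that powr_ge_zero[of t p] by (smt (verit) power_le_one)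
  next
    case False
    then have "t powr 2 \<le> t powr p"
      using assms by (intro powr_mono) auto
    then show ?thesis
      using False by (simp add: powr_realpow)
  qed
  have "\<bar>y * z\<bar> \<le> \<bar>y\<bar>\<^sup>2 + \<bar>z\<bar>\<^sup>2"
    unfolding abs_mult using sum_squares_bound[of "\<bar>y\<bar>" "\<bar>z\<bar>", unfolded mult.assoc]
      mult_nonneg_nonneg[of "\<bar>y\<bar>" "\<bar>z\<bar>"] by linarith
  also have "\<dots> \<le> (1 + \<bar>y\<bar> powr p) + (1 + \<bar>z\<bar> powr p)"
    by (intro add_mono square_le) auto
  finally show ?thesis
    by simp
qed

definition abs_moment_le :: "'a measure \<Rightarrow> real \<Rightarrow> real \<Rightarrow> ('a \<Rightarrow> real) \<Rightarrow> bool" where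
  "abs_moment_le M p K Y \<longleftrightarrow>
     integrable M (\<lambda>w. \<bar>Y w\<bar> powr p) \<and> (\<integral>w. \<bar>Y w\<bar> powr p \<partial>M) \<le> K"

lemma abs_moment_le_nonneg:
  assumes "abs_moment_le M p K Y"
  shows "0 \<le> K"
proof -
  have "0 \<le> (\<integral>w. \<bar>Y w\<bar> powr p \<partial>M)"
    by (rule integral_nonneg_AE) simp
  with assms show ?thesis
    unfolding abs_moment_le_def by linarith
qed

context prob_space
begin

lemma integrable_of_abs_powr:
  fixes Y :: "'a \<Rightarrow> real" and p :: real
  assumes [measurable]: "Y \<in> borel_measurable M"
    and "integrable M (\<lambda>w. \<bar>Y w\<bar> powr p)" and "1 \<le> p"
  shows "integrable M Y"
proof (rule Bochner_Integration.integrable_bound)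
  show "integrable M (\<lambda>w. 1 + \<bar>Y w\<bar> powr p)"
    using assms(2) by simp
  show "AE w in M. norm (Y w) \<le> norm (1 + \<bar>Y w\<bar> powr p)"
    using abs_le_one_add_abs_powr[OF \<open>1 \<le> p\<close>] by (simp add: add_nonneg_nonneg order_trans)
qed simp

lemma integrable_mult_of_abs_powr:
  fixes Y Z :: "'a \<Rightarrow> real" and p :: real
  assumes [measurable]: "Y \<in> borel_measurable M" "Z \<in> borel_measurable M"
    and "integrable M (\<lambda>w. \<bar>Y w\<bar> powr p)" "integrable M (\<lambda>w. \<bar>Z w\<bar> powr p)" and "2 \<le> p"
  shows "integrable M (\<lambda>w. Y w * Z w)"
proof (rule Bochner_Integration.integrable_bound)
  show "integrable M (\<lambda>w. 2 + \<bar>Y w\<bar> powr p + \<bar>Z w\<bar> powr p)"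
    using assms(3,4) by simp
  show "AE w in M. norm (Y w * Z w) \<le> norm (2 + \<bar>Y w\<bar> powr p + \<bar>Z w\<bar> powr p)"
    using abs_mult_le_two_add_abs_powr[OF \<open>2 \<le> p\<close>] by (simp add: add_nonneg_nonneg order_trans)
qed simp

lemma integrable_of_abs_moment_le:
  fixes Y :: "'a \<Rightarrow> real"
  assumes "Y \<in> borel_measurable M" "abs_moment_le M p K Y" "1 \<le> p"
  shows "integrable M Y"
  using assms(2) by (intro integrable_of_abs_powr[OF assms(1) _ assms(3)]) (simp add: abs_moment_le_def)

lemma abs_integral_le_one_add_abs_moment:
  fixes Y :: "'a \<Rightarrow> real" and p :: real
  assumes [measurable]: "Y \<in> borel_measurable M"
    and "integrable M (\<lambda>w. \<bar>Y w\<bar> powr p)" and "1 \<le> p"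
  shows "\<bar>\<integral>w. Y w \<partial>M\<bar> \<le> 1 + (\<integral>w. \<bar>Y w\<bar> powr p \<partial>M)"
proof -
  have "\<bar>\<integral>w. Y w \<partial>M\<bar> \<le> (\<integral>w. \<bar>Y w\<bar> \<partial>M)"
    by (rule integral_abs_bound)
  also have "\<dots> \<le> (\<integral>w. 1 + \<bar>Y w\<bar> powr p \<partial>M)"
    using integrable_of_abs_powr[OF assms] assms(2)
    by (intro integral_mono) (auto intro: abs_le_one_add_abs_powr[OF \<open>1 \<le> p\<close>])
  also have "\<dots> = 1 + (\<integral>w. \<bar>Y w\<bar> powr p \<partial>M)"
    using assms(2) by (simp add: prob_space)
  finally show ?thesis .
qed

lemma abs_integral_diff_mult_le:
  fixes Y Y' Z :: "'a \<Rightarrow> real"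
  assumes [measurable]: "Y \<in> borel_measurable M" "Y' \<in> borel_measurable M" "Z \<in> borel_measurable M"
    and moments: "abs_moment_le M (2 + \<delta>) K Y" "abs_moment_le M (2 + \<delta>) K Y'" "abs_moment_le M (2 + \<delta>) K Z"
    and close: "(\<integral>w. \<bar>Y w - Y' w\<bar> \<partial>M) \<le> \<epsilon>"
    and L: "0 < L" and \<delta>: "0 < \<delta>"
  shows "\<bar>\<integral>w. (Y w - Y' w) * Z w \<partial>M\<bar> \<le> L * \<epsilon> + 4 * K * L powr (-\<delta>)"
proof -
  have p: "1 \<le> 2 + \<delta>" "2 \<le> 2 + \<delta>"
    using \<delta> by auto
  note integrable = moments[unfolded abs_moment_le_def, THEN conjunct1]
  note bounded = moments[unfolded abs_moment_le_def, THEN conjunct2]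
  have "integrable M (\<lambda>w. (Y w - Y' w) * Z w)"
    unfolding left_diff_distrib
    by (intro Bochner_Integration.integrable_diff integrable_mult_of_abs_powr[OF _ _ _ _ p(2)]
        integrable) simp_all
  then have "\<bar>\<integral>w. (Y w - Y' w) * Z w \<partial>M\<bar> \<le> (\<integral>w. L * \<bar>Y w - Y' w\<bar> + L powr (-\<delta>) *
       (\<bar>Y w\<bar> powr (2 + \<delta>) + \<bar>Y' w\<bar> powr (2 + \<delta>) + 2 * \<bar>Z w\<bar> powr (2 + \<delta>)) \<partial>M)"
    using integrable_of_abs_powr[OF _ integrable(1) p(1)] integrable_of_abs_powr[OF _ integrable(2) p(1)]
      integrable L \<delta>
    by (intro integral_abs_bound[THEN order_trans] integral_mono abs_diff_mult_le_split) auto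
  also have "\<dots> = L * (\<integral>w. \<bar>Y w - Y' w\<bar> \<partial>M) + L powr (-\<delta>) *
       ((\<integral>w. \<bar>Y w\<bar> powr (2 + \<delta>) \<partial>M) + (\<integral>w. \<bar>Y' w\<bar> powr (2 + \<delta>) \<partial>M) + 2 * (\<integral>w. \<bar>Z w\<bar> powr (2 + \<delta>) \<partial>M))"
    using integrable_of_abs_powr[OF _ integrable(1) p(1)] integrable_of_abs_powr[OF _ integrable(2) p(1)]
      integrable by simp
  also have "\<dots> \<le> L * \<epsilon> + L powr (-\<delta>) * (K + K + 2 * K)"
    using close bounded L by (intro add_mono mult_left_mono) auto
  finally show ?thesis
    by (simp add: algebra_simps)
qed

lemma abs_cov_le_of_uncorrelated_approx:
  fixes Y Y' Z Z' :: "'a \<Rightarrow> real"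
  assumes [measurable]: "Y \<in> borel_measurable M" "Y' \<in> borel_measurable M"
      "Z \<in> borel_measurable M" "Z' \<in> borel_measurable M"
    and moments: "abs_moment_le M (2 + \<delta>) K Y" "abs_moment_le M (2 + \<delta>) K Y'"
      "abs_moment_le M (2 + \<delta>) K Z" "abs_moment_le M (2 + \<delta>) K Z'"
    and close: "(\<integral>w. \<bar>Y w - Y' w\<bar> \<partial>M) \<le> \<epsilon>" "(\<integral>w. \<bar>Z w - Z' w\<bar> \<partial>M) \<le> \<epsilon>"
    and uncorrelated: "cov M Y' Z' = 0"
    and L: "0 < L" and \<delta>: "0 < \<delta>"
  shows "\<bar>cov M Y Z\<bar> \<le> 2 * (L * \<epsilon> + 4 * K * L powr (-\<delta>)) + 2 * \<epsilon> * (1 + K)"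
proof -
  have p: "1 \<le> 2 + \<delta>" "2 \<le> 2 + \<delta>"
    using \<delta> by auto
  note integrable_powr = moments[unfolded abs_moment_le_def, THEN conjunct1]
  note bounded = moments[unfolded abs_moment_le_def, THEN conjunct2]
  have integrable: "integrable M Y" "integrable M Y'" "integrable M Z" "integrable M Z'"
    using integrable_powr by (auto intro: integrable_of_abs_powr[OF _ _ p(1)])
  have integrable_mult: "integrable M (\<lambda>w. Y w * Z w)" "integrable M (\<lambda>w. Y' w * Z w)"
      "integrable M (\<lambda>w. Y' w * Z' w)"
    by (intro integrable_mult_of_abs_powr[OF _ _ _ _ p(2)] integrable_powr; simp)+
  have mean_close: "\<bar>(\<integral>w. V w \<partial>M) - (\<integral>w. V' w \<partial>M)\<bar> \<le> \<epsilon>"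
    if "integrable M V" "integrable M V'" "(\<integral>w. \<bar>V w - V' w\<bar> \<partial>M) \<le> \<epsilon>" for V V' :: "'a \<Rightarrow> real"
    using that integral_abs_bound[of M "\<lambda>w. V w - V' w"] by simp
  have mean_le: "\<bar>\<integral>w. V w \<partial>M\<bar> \<le> 1 + K" if "V \<in> borel_measurable M" "abs_moment_le M (2 + \<delta>) K V" for V
    using that abs_integral_le_one_add_abs_moment[OF _ _ p(1), of V] by (auto simp: abs_moment_le_def)
  define D1 where "D1 = (\<integral>w. (Y w - Y' w) * Z w \<partial>M)"
  define D2 where "D2 = (\<integral>w. (Z w - Z' w) * Y' w \<partial>M)"
  define E1 where "E1 = ((\<integral>w. Y w \<partial>M) - (\<integral>w. Y' w \<partial>M)) * (\<integral>w. Z w \<partial>M)"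
  define E2 where "E2 = (\<integral>w. Y' w \<partial>M) * ((\<integral>w. Z w \<partial>M) - (\<integral>w. Z' w \<partial>M))"
  have "cov M Y Z = D1 + D2 - E1 - E2"
    using integrable_mult uncorrelated unfolding cov_def D1_def D2_def E1_def E2_def left_diff_distrib
    by (simp add: Bochner_Integration.integral_diff algebra_simps)
  then have "\<bar>cov M Y Z\<bar> \<le> \<bar>D1\<bar> + \<bar>D2\<bar> + \<bar>E1\<bar> + \<bar>E2\<bar>"
    by arith
  also have "\<dots> \<le> (L * \<epsilon> + 4 * K * L powr (-\<delta>)) + (L * \<epsilon> + 4 * K * L powr (-\<delta>)) + \<epsilon> * (1 + K) + (1 + K) * \<epsilon>"
    unfolding D1_def D2_def E1_def E2_def abs_mult
    using abs_integral_diff_mult_le[OF assms(1,2,3) moments(1,2,3) close(1) L \<delta>]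
      abs_integral_diff_mult_le[OF assms(3,4,2) moments(3,4,2) close(2) L \<delta>]
      mean_close[OF integrable(1,2) close(1)] mean_le[OF _ moments(3)]
      mean_close[OF integrable(3,4) close(2)] mean_le[OF _ moments(2)]
    by (intro add_mono mult_mono) auto
  finally show ?thesis
    by (simp add: algebra_simps)
qed
end

section \<open>I.i.d. sequences\<close>

locale iid_sequence = prob_space M for M :: "'a measure" +
  fixes X :: "int \<Rightarrow> 'a \<Rightarrow> 'b::topological_space"
  assumes random_variable_X [measurable]: "\<And>t. X t \<in> borel_measurable M"
    and indep_X: "indep_vars (\<lambda>_. borel) X UNIV"
    and identically_distributed_X: "\<And>t. distr M borel (X t) = distr M borel (X 1)"
begin

lemma measurable_shifted_sequence [measurable]:
  "(\<lambda>w i. X (i + h) w) \<in> measurable M (Pi\<^sub>M UNIV (\<lambda>_. borel))"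
proof -
  have "(\<lambda>w. \<lambda>i\<in>UNIV. X (i + h) w) \<in> measurable M (Pi\<^sub>M UNIV (\<lambda>_. borel))"
    by (intro measurable_restrict) simp
  then show ?thesis
    by (simp add: restrict_UNIV)
qed

lemma distr_shifted_sequence:
  "distr M (Pi\<^sub>M UNIV (\<lambda>_. borel)) (\<lambda>w i. X (i + h) w) = distr M (Pi\<^sub>M UNIV (\<lambda>_. borel)) (\<lambda>w i. X i w)"
proof -
  define D where "D = distr M borel (X 1)"
  have "prob_space D"
    unfolding D_def by (intro prob_space_distr) simp
  have law: "distr M (Pi\<^sub>M UNIV (\<lambda>_. borel)) (\<lambda>w i. X i w) = Pi\<^sub>M UNIV (\<lambda>_. D)"
  proof -
    have "distr M (Pi\<^sub>M UNIV (\<lambda>_. borel)) (\<lambda>w. \<lambda>i\<in>UNIV. X i w) = Pi\<^sub>M UNIV (\<lambda>i. distr M borel (X i))"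
      using indep_X by (intro indep_vars_iff_distr_eq_PiM[THEN iffD1]) auto
    also have "\<dots> = Pi\<^sub>M UNIV (\<lambda>_. D)"
      unfolding D_def by (intro PiM_cong refl identically_distributed_X)
    finally show ?thesis
      by (simp add: restrict_UNIV)
  qed
  have "(\<lambda>\<omega>. \<lambda>i\<in>UNIV. \<omega> (i + h)) \<in> measurable (Pi\<^sub>M UNIV (\<lambda>_. borel)) (Pi\<^sub>M UNIV (\<lambda>_::int. borel :: 'b measure))"
    by (intro measurable_restrict measurable_component_singleton) simp_all
  then have shift: "(\<lambda>\<omega> i. \<omega> (i + h)) \<in> measurable (Pi\<^sub>M UNIV (\<lambda>_. borel)) (Pi\<^sub>M UNIV (\<lambda>_::int. borel :: 'b measure))"
    by (simp add: restrict_UNIV)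
  have "distr M (Pi\<^sub>M UNIV (\<lambda>_. borel)) (\<lambda>w i. X (i + h) w)
      = distr (Pi\<^sub>M UNIV (\<lambda>_. D)) (Pi\<^sub>M UNIV (\<lambda>_. borel)) (\<lambda>\<omega> i. \<omega> (i + h))"
    using distr_distr[OF shift measurable_shifted_sequence[of 0]] by (simp add: law comp_def)
  also have "\<dots> = distr (Pi\<^sub>M UNIV (\<lambda>_. D)) (Pi\<^sub>M UNIV (\<lambda>i. (\<lambda>_. D) (i + h))) (\<lambda>\<omega>. \<lambda>n\<in>UNIV. \<omega> (n + h))"
    by (intro distr_cong sets_PiM_cong) (simp_all add: D_def restrict_UNIV)
  also have "\<dots> = Pi\<^sub>M UNIV (\<lambda>_. D)"
    using \<open>prob_space D\<close> by (intro distr_PiM_reindex) (auto simp: inj_on_def)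
  finally show ?thesis
    by (simp add: law)
qed

lemma abs_moment_le_shifted_sequence_iff:
  assumes [measurable]: "\<Phi> \<in> borel_measurable (Pi\<^sub>M UNIV (\<lambda>_. borel))"
  shows "abs_moment_le M p K (\<lambda>w. \<Phi> (\<lambda>i. X (i + h) w)) \<longleftrightarrow> abs_moment_le M p K (\<lambda>w. \<Phi> (\<lambda>i. X i w))"
proof -
  have sequence: "(\<lambda>w i. X i w) \<in> measurable M (Pi\<^sub>M UNIV (\<lambda>_. borel))"
    using measurable_shifted_sequence[of 0] by simp
  define \<Psi> where "\<Psi> e = \<bar>\<Phi> e\<bar> powr p" for e
  have [measurable]: "\<Psi> \<in> borel_measurable (Pi\<^sub>M UNIV (\<lambda>_. borel))"
    unfolding \<Psi>_def by measurable
  have "integrable M (\<lambda>w. \<Psi> (\<lambda>i. X (i + h) w)) \<longleftrightarrow> integrable M (\<lambda>w. \<Psi> (\<lambda>i. X i w))"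
    using integrable_distr_eq[of "\<lambda>w i. X (i + h) w" M "Pi\<^sub>M UNIV (\<lambda>_. borel)" \<Psi>]
      integrable_distr_eq[OF sequence, of \<Psi>]
    by (simp add: distr_shifted_sequence)
  moreover have "(\<integral>w. \<Psi> (\<lambda>i. X (i + h) w) \<partial>M) = (\<integral>w. \<Psi> (\<lambda>i. X i w) \<partial>M)"
    using integral_distr[of "\<lambda>w i. X (i + h) w" M "Pi\<^sub>M UNIV (\<lambda>_. borel)" \<Psi>]
      integral_distr[OF sequence, of \<Psi>]
    by (simp add: distr_shifted_sequence)
  ultimately show ?thesis
    by (simp add: abs_moment_le_def \<Psi>_def)
qed

lemma cov_disjoint_blocks_eq_0:
  assumes "J1 \<inter> J2 = {}"
    and [measurable]: "F1 \<in> borel_measurable (Pi\<^sub>M J1 (\<lambda>_. borel))" "F2 \<in> borel_measurable (Pi\<^sub>M J2 (\<lambda>_. borel))"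
    and "integrable M (\<lambda>w. F1 (restrict (\<lambda>i. X i w) J1))" "integrable M (\<lambda>w. F2 (restrict (\<lambda>i. X i w) J2))"
  shows "cov M (\<lambda>w. F1 (restrict (\<lambda>i. X i w) J1)) (\<lambda>w. F2 (restrict (\<lambda>i. X i w) J2)) = 0"
proof -
  have "indep_var (Pi\<^sub>M J1 (\<lambda>_. borel)) (\<lambda>w. restrict (\<lambda>i. X i w) J1)
      (Pi\<^sub>M J2 (\<lambda>_. borel)) (\<lambda>w. restrict (\<lambda>i. X i w) J2)"
    using assms(1) by (intro indep_var_restrict[OF indep_X]) auto
  from indep_var_compose[OF this assms(2,3)]
  have "indep_var borel (\<lambda>w. F1 (restrict (\<lambda>i. X i w) J1)) borel (\<lambda>w. F2 (restrict (\<lambda>i. X i w) J2))"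
    by (simp add: comp_def)
  then show ?thesis
    unfolding cov_def using indep_var_lebesgue_integral assms(4,5) by simp
qed

end

section \<open>The stationary approximation\<close>

lemma balanced_truncation_le:
  fixes \<theta> \<delta> c K x :: real and m :: nat
  assumes \<theta>: "0 < \<theta>" "\<theta> < 1" and \<delta>: "0 < \<delta>" and c: "0 \<le> c" and K: "0 \<le> K"
    and x: "x \<le> 2 * real m"
  defines "L \<equiv> \<theta> powr (- (real m / (1 + \<delta>)))"
  shows "2 * (L * (c * \<theta> ^ m) + 4 * K * L powr (-\<delta>)) + 2 * (c * \<theta> ^ m) * (1 + K)
    \<le> (2 * c + 8 * K + 2 * c * (1 + K)) * \<theta> powr (x * \<delta> / (2 * (1 + \<delta>)))"
proof -
  define q where "q = \<theta> powr (real m * \<delta> / (1 + \<delta>))"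
  have \<theta>_power: "\<theta> ^ m = \<theta> powr real m"
    using \<theta> by (simp add: powr_realpow)
  have L_mult: "L * \<theta> ^ m = q"
    unfolding L_def q_def \<theta>_power powr_add[symmetric] using \<delta> by (simp add: field_simps)
  have L_powr: "L powr (-\<delta>) = q"
    unfolding L_def q_def powr_powr by simp
  have "real m * \<delta> / (1 + \<delta>) \<le> real m"
    using \<delta> by (simp add: field_simps)
  then have power_le: "\<theta> ^ m \<le> q"
    unfolding q_def \<theta>_power using \<theta> by (intro powr_mono') auto
  have "x * \<delta> / (2 * (1 + \<delta>)) \<le> (2 * real m) * \<delta> / (2 * (1 + \<delta>))"
    using \<delta> x by (intro divide_right_mono mult_right_mono) auto
  also have "\<dots> = real m * \<delta> / (1 + \<delta>)"
    using \<delta> by (simp add: field_simps)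
  finally have q_le: "q \<le> \<theta> powr (x * \<delta> / (2 * (1 + \<delta>)))"
    unfolding q_def using \<theta> by (intro powr_mono') auto
  have "2 * (L * (c * \<theta> ^ m) + 4 * K * L powr (-\<delta>)) + 2 * (c * \<theta> ^ m) * (1 + K)
      = 2 * (c * q + 4 * K * q) + 2 * c * (1 + K) * \<theta> ^ m"
    using L_mult L_powr by (simp add: algebra_simps)
  also have "\<dots> \<le> 2 * (c * q + 4 * K * q) + 2 * c * (1 + K) * q"
    using power_le c K by (intro add_left_mono mult_left_mono) auto
  also have "\<dots> = (2 * c + 8 * K + 2 * c * (1 + K)) * q"
    by (simp add: algebra_simps)
  also have "\<dots> \<le> (2 * c + 8 * K + 2 * c * (1 + K)) * \<theta> powr (x * \<delta> / (2 * (1 + \<delta>)))"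
    using q_le c K by (intro mult_left_mono) auto
  finally show ?thesis .
qed

locale linear_process = iid_sequence M eps for M :: "'a measure" and eps :: "int \<Rightarrow> 'a \<Rightarrow> real^'d" +
  fixes \<mu> :: "real \<Rightarrow> real^'d" and A :: "real \<Rightarrow> int \<Rightarrow> real^'d^'d" and \<theta> B :: real
  assumes integrable_vnorm1_eps: "integrable M (\<lambda>w. vnorm1 (eps 1 w))"
    and \<theta>: "0 < \<theta>" "\<theta> < 1"
    and A_le: "\<And>u j p q. u \<in> {0..1} \<Longrightarrow> \<bar>A u j $ p $ q\<bar> \<le> B * \<theta> ^ nat \<bar>j\<bar>"
begin

definition truncation_const :: real where
  "truncation_const = real CARD('d) * B * expectation (\<lambda>w. vnorm1 (eps 1 w)) * 2 / (1 - \<theta>)"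

definition cov_const :: "real \<Rightarrow> real \<Rightarrow> real" where
  "cov_const C K = 2 * (C * truncation_const) + 8 * K + 2 * (C * truncation_const) * (1 + K)"

lemma B_nonneg: "0 \<le> B"
proof -
  have "\<bar>A 0 0 $ p $ q\<bar> \<le> B" for p q
    using A_le[of 0 0 p q] by simp
  then show ?thesis
    using abs_ge_zero order_trans by blast
qed

lemma nn_integral_vnorm1_eps:
  "(\<integral>\<^sup>+w. ennreal (vnorm1 (eps t w)) \<partial>M) = ennreal (expectation (\<lambda>w. vnorm1 (eps 1 w)))"
proof -
  have "(\<integral>\<^sup>+w. ennreal (vnorm1 (eps t w)) \<partial>M) = (\<integral>\<^sup>+x. ennreal (vnorm1 x) \<partial>distr M borel (eps t))"
    by (simp add: nn_integral_distr)
  also have "\<dots> = (\<integral>\<^sup>+w. ennreal (vnorm1 (eps 1 w)) \<partial>M)"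
    by (simp add: identically_distributed_X[of t] nn_integral_distr)
  also have "\<dots> = ennreal (expectation (\<lambda>w. vnorm1 (eps 1 w)))"
    using integrable_vnorm1_eps by (intro nn_integral_eq_integral) auto
  finally show ?thesis .
qed

lemma truncation_const_nonneg: "0 \<le> truncation_const"
  using B_nonneg \<theta> unfolding truncation_const_def by simp

lemma borel_measurable_Xtil [measurable]: "(\<lambda>w. Xtil \<mu> A eps t u w) \<in> borel_measurable M"
  unfolding Xtil_def by (intro borel_measurable_add borel_measurable_const borel_measurable_infsum_int) simp

lemma borel_measurable_XtilM [measurable]: "(\<lambda>w. XtilM \<mu> A eps m t u w) \<in> borel_measurable M"
  unfolding XtilM_def by measurable

lemma nn_integral_vnorm1_Xtil_minus_XtilM_le:
  assumes "u \<in> {0..1}"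
  shows "(\<integral>\<^sup>+w. ennreal (vnorm1 (Xtil \<mu> A eps t u w - XtilM \<mu> A eps m t u w)) \<partial>M)
    \<le> ennreal (truncation_const * \<theta> ^ m)"
proof -
  have "Xtil \<mu> A eps t u w - XtilM \<mu> A eps m t u w
      = infsum (\<lambda>j. A u j *v eps (t - j) w) UNIV - (\<Sum>j\<in>lag_window m. A u j *v eps (t - j) w)" for w
    by (simp add: Xtil_def XtilM_def lag_window_def)
  moreover have "real CARD('d) * B * expectation (\<lambda>w. vnorm1 (eps 1 w)) * (2 * \<theta> ^ m / (1 - \<theta>))
      = truncation_const * \<theta> ^ m"
    by (simp add: truncation_const_def)
  ultimately show ?thesis
    using nn_integral_linear_filter_tail_le[where N=M and v="\<lambda>j. eps (t - j)" and a="A u"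
        and b=B and \<theta>=\<theta> and E="expectation (\<lambda>w. vnorm1 (eps 1 w))" and m=m] A_le[OF assms] \<theta> B_nonneg
    by (simp add: nn_integral_vnorm1_eps)
qed

lemma integral_abs_diff_Xtil_XtilM_le:
  assumes Lipschitz: "\<And>x y. \<bar>g x - g y\<bar> \<le> C * vnorm1 (x - y)" and "0 \<le> C" and "u \<in> {0..1}"
  shows "(\<integral>w. \<bar>g (Xtil \<mu> A eps t u w) - g (XtilM \<mu> A eps m t u w)\<bar> \<partial>M) \<le> C * truncation_const * \<theta> ^ m"
proof -
  have [measurable]: "g \<in> borel_measurable borel"
    using Lipschitz by (rule borel_measurable_vnorm1_Lipschitz)
  have "(\<integral>\<^sup>+w. ennreal \<bar>g (Xtil \<mu> A eps t u w) - g (XtilM \<mu> A eps m t u w)\<bar> \<partial>M)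
      \<le> (\<integral>\<^sup>+w. ennreal C * ennreal (vnorm1 (Xtil \<mu> A eps t u w - XtilM \<mu> A eps m t u w)) \<partial>M)"
    using Lipschitz \<open>0 \<le> C\<close> by (intro nn_integral_mono) (simp add: ennreal_mult[symmetric] ennreal_leI)
  also have "\<dots> = ennreal C * (\<integral>\<^sup>+w. ennreal (vnorm1 (Xtil \<mu> A eps t u w - XtilM \<mu> A eps m t u w)) \<partial>M)"
    by (rule nn_integral_cmult) measurable
  also have "\<dots> \<le> ennreal C * ennreal (truncation_const * \<theta> ^ m)"
    by (intro mult_left_mono nn_integral_vnorm1_Xtil_minus_XtilM_le \<open>u \<in> {0..1}\<close>) simp
  also have "\<dots> = ennreal (C * truncation_const * \<theta> ^ m)"
    using \<open>0 \<le> C\<close> truncation_const_nonneg \<theta> by (simp add: ennreal_mult[symmetric] mult.assoc)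
  finally show ?thesis
    using \<open>0 \<le> C\<close> truncation_const_nonneg \<theta>
    by (simp add: integral_eq_nn_integral enn2real_leI)
qed

lemma abs_moment_le_Xtil_shift_iff:
  assumes [measurable]: "g \<in> borel_measurable borel"
  shows "abs_moment_le M p K (\<lambda>w. g (Xtil \<mu> A eps h u w)) \<longleftrightarrow> abs_moment_le M p K (\<lambda>w. g (Xtil \<mu> A eps 0 u w))"
proof -
  define \<Phi> where "\<Phi> e = g (\<mu> u + infsum (\<lambda>j. A u j *v e (- j)) UNIV)" for e :: "int \<Rightarrow> real^'d"
  have "(\<lambda>e. infsum (\<lambda>j. A u j *v e (- j)) UNIV) \<in> borel_measurable (Pi\<^sub>M UNIV (\<lambda>_. borel))"
    by (intro borel_measurable_infsum_int) measurable
  then have "\<Phi> \<in> borel_measurable (Pi\<^sub>M UNIV (\<lambda>_. borel))"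
    unfolding \<Phi>_def by measurable
  from abs_moment_le_shifted_sequence_iff[OF this, of p K h] show ?thesis
    by (simp add: \<Phi>_def Xtil_def)
qed

lemma abs_moment_le_XtilM_shift_iff:
  assumes [measurable]: "g \<in> borel_measurable borel"
  shows "abs_moment_le M p K (\<lambda>w. g (XtilM \<mu> A eps m h u w)) \<longleftrightarrow> abs_moment_le M p K (\<lambda>w. g (XtilM \<mu> A eps m 0 u w))"
proof -
  define \<Phi> where "\<Phi> e = g (\<mu> u + (\<Sum>j\<in>lag_window m. A u j *v e (- j)))" for e :: "int \<Rightarrow> real^'d"
  have "\<Phi> \<in> borel_measurable (Pi\<^sub>M UNIV (\<lambda>_. borel))"
    unfolding \<Phi>_def by measurable
  from abs_moment_le_shifted_sequence_iff[OF this, of p K h] show ?thesis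
    by (simp add: \<Phi>_def XtilM_def lag_window_def)
qed

text \<open>For \<open>2 * m \<le> \<bar>h\<bar> + 1\<close> the truncations at times \<open>0\<close> and \<open>h\<close> read the innovations on the
  disjoint windows \<open>\<bar>i\<bar> < m\<close> and \<open>\<bar>i - h\<bar> < m\<close>.\<close>
lemma cov_XtilM_eq_0:
  assumes "2 * int m \<le> \<bar>h\<bar> + 1"
    and [measurable]: "g1 \<in> borel_measurable borel" "g2 \<in> borel_measurable borel"
    and "integrable M (\<lambda>w. g1 (XtilM \<mu> A eps m 0 u1 w))" "integrable M (\<lambda>w. g2 (XtilM \<mu> A eps m h u2 w))"
  shows "cov M (\<lambda>w. g1 (XtilM \<mu> A eps m 0 u1 w)) (\<lambda>w. g2 (XtilM \<mu> A eps m h u2 w)) = 0"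
proof -
  define J where "J = {i. \<bar>i - h\<bar> < int m}"
  define F1 where "F1 e = g1 (\<mu> u1 + (\<Sum>j\<in>lag_window m. A u1 j *v e (- j)))" for e :: "int \<Rightarrow> real^'d"
  define F2 where "F2 e = g2 (\<mu> u2 + (\<Sum>j\<in>lag_window m. A u2 j *v e (h - j)))" for e :: "int \<Rightarrow> real^'d"
  have "lag_window m \<inter> J = {}"
    using assms(1) by (auto simp: lag_window_def J_def)
  moreover have "F1 \<in> borel_measurable (Pi\<^sub>M (lag_window m) (\<lambda>_. borel))"
    unfolding F1_def
    by (intro measurable_compose[OF _ assms(2)] borel_measurable_add borel_measurable_const
        borel_measurable_sum borel_measurable_matrix_vector_mult measurable_component_singleton)
      (auto simp: lag_window_def)
  moreover have "F2 \<in> borel_measurable (Pi\<^sub>M J (\<lambda>_. borel))"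
    unfolding F2_def
    by (intro measurable_compose[OF _ assms(3)] borel_measurable_add borel_measurable_const
        borel_measurable_sum borel_measurable_matrix_vector_mult measurable_component_singleton)
      (auto simp: lag_window_def J_def)
  moreover have "g1 (XtilM \<mu> A eps m 0 u1 w) = F1 (restrict (\<lambda>i. eps i w) (lag_window m))"
    and "g2 (XtilM \<mu> A eps m h u2 w) = F2 (restrict (\<lambda>i. eps i w) J)" for w
    unfolding F1_def F2_def XtilM_def
    by (auto intro!: arg_cong[where f=g1] arg_cong[where f=g2] sum.cong simp: lag_window_def J_def)
  ultimately show ?thesis
    using cov_disjoint_blocks_eq_0[of "lag_window m" J F1 F2] assms(4,5) by simp
qed

lemma abs_cov_Xtil_le:
  fixes f :: "'s \<Rightarrow> real^'d \<Rightarrow> real"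
  assumes Lipschitz: "\<And>s x y. s \<in> S \<Longrightarrow> \<bar>f s x - f s y\<bar> \<le> C * vnorm1 (x - y)" and "0 \<le> C"
    and moments: "\<And>s u m. s \<in> S \<Longrightarrow> u \<in> {0..1} \<Longrightarrow>
      abs_moment_le M (2 + \<delta>) K (\<lambda>w. f s (Xtil \<mu> A eps 0 u w)) \<and>
      abs_moment_le M (2 + \<delta>) K (\<lambda>w. f s (XtilM \<mu> A eps m 0 u w))"
    and \<delta>: "0 < \<delta>" and s: "s1 \<in> S" "s2 \<in> S" and u: "u1 \<in> {0..1}" "u2 \<in> {0..1}"
  shows "\<bar>cov M (\<lambda>w. f s1 (Xtil \<mu> A eps 0 u1 w)) (\<lambda>w. f s2 (Xtil \<mu> A eps h u2 w))\<bar>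
    \<le> cov_const C K * \<theta> powr (real_of_int \<bar>h\<bar> * \<delta> / (2 * (1 + \<delta>)))"
proof -
  define m where "m = nat ((\<bar>h\<bar> + 1) div 2)"
  have m: "2 * int m \<le> \<bar>h\<bar> + 1" "real_of_int \<bar>h\<bar> \<le> 2 * real m"
    unfolding m_def by linarith+
  have f_measurable: "f s \<in> borel_measurable borel" if "s \<in> S" for s
    using Lipschitz[OF that] by (rule borel_measurable_vnorm1_Lipschitz)
  note [measurable] = f_measurable[OF s(1)] f_measurable[OF s(2)]
  have moments_Y: "abs_moment_le M (2 + \<delta>) K (\<lambda>w. f s1 (Xtil \<mu> A eps 0 u1 w))"
      "abs_moment_le M (2 + \<delta>) K (\<lambda>w. f s1 (XtilM \<mu> A eps m 0 u1 w))"
    using moments[OF s(1) u(1)] by auto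
  have moments_Z: "abs_moment_le M (2 + \<delta>) K (\<lambda>w. f s2 (Xtil \<mu> A eps h u2 w))"
      "abs_moment_le M (2 + \<delta>) K (\<lambda>w. f s2 (XtilM \<mu> A eps m h u2 w))"
    using moments[OF s(2) u(2)] abs_moment_le_Xtil_shift_iff[OF f_measurable[OF s(2)]]
      abs_moment_le_XtilM_shift_iff[OF f_measurable[OF s(2)]] by blast+
  have p: "1 \<le> 2 + \<delta>"
    using \<delta> by simp
  have uncorrelated:
    "cov M (\<lambda>w. f s1 (XtilM \<mu> A eps m 0 u1 w)) (\<lambda>w. f s2 (XtilM \<mu> A eps m h u2 w)) = 0"
    by (rule cov_XtilM_eq_0[OF m(1) f_measurable[OF s(1)] f_measurable[OF s(2)]
        integrable_of_abs_moment_le[OF _ moments_Y(2) p] integrable_of_abs_moment_le[OF _ moments_Z(2) p]];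
        measurable)
  have L: "0 < \<theta> powr (- (real m / (1 + \<delta>)))"
    using \<theta> by simp
  have "\<bar>cov M (\<lambda>w. f s1 (Xtil \<mu> A eps 0 u1 w)) (\<lambda>w. f s2 (Xtil \<mu> A eps h u2 w))\<bar>
      \<le> 2 * (\<theta> powr (- (real m / (1 + \<delta>))) * (C * truncation_const * \<theta> ^ m)
          + 4 * K * (\<theta> powr (- (real m / (1 + \<delta>)))) powr (-\<delta>))
        + 2 * (C * truncation_const * \<theta> ^ m) * (1 + K)"
    by (rule abs_cov_le_of_uncorrelated_approx[OF _ _ _ _ moments_Y moments_Z
        integral_abs_diff_Xtil_XtilM_le[OF Lipschitz[OF s(1)] \<open>0 \<le> C\<close> u(1)]
        integral_abs_diff_Xtil_XtilM_le[OF Lipschitz[OF s(2)] \<open>0 \<le> C\<close> u(2)]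
        uncorrelated L \<delta>]; measurable)
  also have "\<dots> \<le> cov_const C K * \<theta> powr (real_of_int \<bar>h\<bar> * \<delta> / (2 * (1 + \<delta>)))"
    unfolding cov_const_def
    using balanced_truncation_le[OF \<theta> \<delta> _ abs_moment_le_nonneg[OF moments_Y(1)] m(2), of "C * truncation_const"]
      \<open>0 \<le> C\<close> truncation_const_nonneg by (simp add: mult.assoc)
  finally show ?thesis .
qed

end

theorem lemma3:
  fixes M :: "'a measure"
    and eps :: "int \<Rightarrow> 'a \<Rightarrow> real ^ 'd"
    and \<mu> :: "real \<Rightarrow> real ^ 'd"
    and A :: "real \<Rightarrow> int \<Rightarrow> real ^ 'd ^ 'd"
    and At :: "int \<Rightarrow> nat \<Rightarrow> int \<Rightarrow> real ^ 'd ^ 'd"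
    and \<theta> B :: real
    and S :: "(ereal ^ 'd) set" and \<rho> :: "ereal ^ 'd \<Rightarrow> ereal ^ 'd \<Rightarrow> real"
    and f :: "ereal ^ 'd \<Rightarrow> real ^ 'd \<Rightarrow> real"
    and C_Lip \<delta> K :: real
  assumes prob: "prob_space M"
    (* innovations: i.i.d., centred, integrable l1-norm *)
    and eps_rv: "\<And>t. eps t \<in> borel_measurable M"
    and eps_indep: "prob_space.indep_vars M (\<lambda>_. borel) eps UNIV"
    and eps_ident: "\<And>t. distr M borel (eps t) = distr M borel (eps 1)"
    and eps_int: "integrable M (\<lambda>w. vnorm1 (eps 1 w))"
    and eps_centred: "integrable M (eps 1)" "(\<integral>w. eps 1 w \<partial>M) = 0"
    (* (LS) with k = 0 *)
    and mu_C1: "\<mu> C1_differentiable_on {0..1}"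
    and theta: "0 < \<theta>" "\<theta> < 1"
    and At_bound: "\<And>t T j. 1 \<le> t \<Longrightarrow> t \<le> int T \<Longrightarrow> mnorm1 (At t T j) \<le> B * \<theta> ^ nat \<bar>j\<bar>"
    and A_C1: "\<And>j p q. (\<lambda>u. A u j $ p $ q) C1_differentiable_on {0..1}"
    and A_bound: "\<And>u j p q. u \<in> {0..1} \<Longrightarrow> \<bar>A u j $ p $ q\<bar> \<le> B * \<theta> ^ nat \<bar>j\<bar>"
    and At_approx: "\<And>t T j. 1 \<le> t \<Longrightarrow> t \<le> int T \<Longrightarrow>
        real T * mnorm1 (At t T j - A (real_of_int t / real T) j) \<le> B * \<theta> ^ nat \<bar>j\<bar>"
    (* (F1) *)
    and S_compact: "compact_semimetric S \<rho>"
    and f_Lip: "\<And>s x y. s \<in> S \<Longrightarrow> \<bar>f s x - f s y\<bar> \<le> C_Lip * vnorm1 (x - y)"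
    and delta: "0 < \<delta>" "\<delta> < 1/2"
    and mom_X: "\<And>s t T. s \<in> S \<Longrightarrow> 1 \<le> t \<Longrightarrow> t \<le> int T \<Longrightarrow>
        integrable M (\<lambda>w. \<bar>f s (XLS \<mu> At eps t T w)\<bar> powr (2 + \<delta>)) \<and>
        (\<integral>w. \<bar>f s (XLS \<mu> At eps t T w)\<bar> powr (2 + \<delta>) \<partial>M) \<le> K"
    and mom_XM: "\<And>s t T m. s \<in> S \<Longrightarrow> 1 \<le> t \<Longrightarrow> t \<le> int T \<Longrightarrow>
        integrable M (\<lambda>w. \<bar>f s (XLSM \<mu> At eps m t T w)\<bar> powr (2 + \<delta>)) \<and>
        (\<integral>w. \<bar>f s (XLSM \<mu> At eps m t T w)\<bar> powr (2 + \<delta>) \<partial>M) \<le> K"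
    and mom_Xtil: "\<And>s u. s \<in> S \<Longrightarrow> u \<in> {0..1} \<Longrightarrow>
        integrable M (\<lambda>w. \<bar>f s (Xtil \<mu> A eps 0 u w)\<bar> powr (2 + \<delta>)) \<and>
        (\<integral>w. \<bar>f s (Xtil \<mu> A eps 0 u w)\<bar> powr (2 + \<delta>) \<partial>M) \<le> K"
    and mom_XtilM: "\<And>s u m. s \<in> S \<Longrightarrow> u \<in> {0..1} \<Longrightarrow>
        integrable M (\<lambda>w. \<bar>f s (XtilM \<mu> A eps m 0 u w)\<bar> powr (2 + \<delta>)) \<and>
        (\<integral>w. \<bar>f s (XtilM \<mu> A eps m 0 u w)\<bar> powr (2 + \<delta>) \<partial>M) \<le> K"
  shows "\<exists>C_Cov::real. \<forall>h::int. \<forall>s1\<in>S. \<forall>s2\<in>S. \<forall>u1\<in>{0..1}. \<forall>u2\<in>{0..1}.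
           \<bar>cov M (\<lambda>w. f s1 (Xtil \<mu> A eps 0 u1 w)) (\<lambda>w. f s2 (Xtil \<mu> A eps h u2 w))\<bar>
             \<le> C_Cov * \<theta> powr (real_of_int \<bar>h\<bar> * \<delta> / (2 * (1 + \<delta>)))"
proof -
  interpret linear_process M eps \<mu> A \<theta> B
    by (intro linear_process.intro iid_sequence.intro linear_process_axioms.intro iid_sequence_axioms.intro
        prob eps_rv eps_indep eps_ident eps_int theta A_bound)
  have Lipschitz: "\<bar>f s x - f s y\<bar> \<le> max C_Lip 0 * vnorm1 (x - y)" if "s \<in> S" for s x y
    using f_Lip[OF that, of x y] by (smt (verit) mult_right_mono vnorm1_nonneg)
  have moments: "abs_moment_le M (2 + \<delta>) K (\<lambda>w. f s (Xtil \<mu> A eps 0 u w)) \<and>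
      abs_moment_le M (2 + \<delta>) K (\<lambda>w. f s (XtilM \<mu> A eps m 0 u w))" if "s \<in> S" "u \<in> {0..1}" for s u m
    using mom_Xtil[OF that] mom_XtilM[OF that] by (simp add: abs_moment_le_def)
  show ?thesis
    using abs_cov_Xtil_le[where f=f, OF Lipschitz _ moments delta(1)]
    by (intro exI[of _ "cov_const (max C_Lip 0) K"]) auto
qed

end
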